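(* $$D_{\mathbb{R},2}\ge D_{\mathbb{R},2}(\ell_\infty^2)=\sup\left\{\left[2t^{4/3}+\left(2\sqrt{t(1-t)}\right)^{4/3}\right]^{3/4}: t\in[1/2,1]\right\}\approx1.8374.$$
   Context: $\ell_\infty^n$ is $\mathbb{R}^n$ with the sup norm; for a polynomial $P$ on $\ell_\infty^n$, $\|P\|=\sup_{x\in[-1,1]^n}|P(x)|$. For $P(x)=\sum_{|\alpha|=m}a_\alpha x^\alpha$ an $m$-homogeneous polynomial, write $\|P\|_{\mathrm{coef}}=\big(\sum_{|\alpha|=m}|a_\alpha|^{\frac{2m}{m+1}}\big)^{\frac{m+1}{2m}}$. $D_{\mathbb{R},m}(\ell_\infty^n)=\sup\{\|P\|_{\mathrm{coef}}/\|P\|: P\neq0 \text{ real $m$-homogeneous on }\ell_\infty^n\}$, and $D_{\mathbb{R},m}=\sup_n D_{\mathbb{R},m}(\ell_\infty^n)$ is the optimal constant in the real polynomial Bohnenblust–Hille inequality $\|P\|_{\mathrm{coef}}\le D\|P\|$. *)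

theory Defs
  imports "HOL-Analysis.Analysis"
begin

text \<open>Multi-indices \<alpha> in N^n with |\<alpha>| = m, encoded as functions nat => nat
  vanishing outside {0..<n}.\<close>
definition multi_idx :: "nat \<Rightarrow> nat \<Rightarrow> (nat \<Rightarrow> nat) set" where
  "multi_idx n m = {\<alpha>. (\<forall>i\<ge>n. \<alpha> i = 0) \<and> (\<Sum>i<n. \<alpha> i) = m}"

text \<open>The m-homogeneous polynomial on R^n with coefficients a (only a restricted
  to multi_idx n m matters), evaluated at x (only x 0 .. x (n-1) matter).\<close>
definition hpoly_eval :: "nat \<Rightarrow> nat \<Rightarrow> ((nat \<Rightarrow> nat) \<Rightarrow> real) \<Rightarrow> (nat \<Rightarrow> real) \<Rightarrow> real" where
  "hpoly_eval n m a x = (\<Sum>\<alpha>\<in>multi_idx n m. a \<alpha> * (\<Prod>i<n. x i ^ \<alpha> i))"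

definition hpoly_norm :: "nat \<Rightarrow> nat \<Rightarrow> ((nat \<Rightarrow> nat) \<Rightarrow> real) \<Rightarrow> real" where
  "hpoly_norm n m a = (SUP x\<in>{x. \<forall>i<n. \<bar>x i\<bar> \<le> 1}. \<bar>hpoly_eval n m a x\<bar>)"

definition hpoly_coef_norm :: "nat \<Rightarrow> nat \<Rightarrow> ((nat \<Rightarrow> nat) \<Rightarrow> real) \<Rightarrow> real" where
  "hpoly_coef_norm n m a =
     (\<Sum>\<alpha>\<in>multi_idx n m. \<bar>a \<alpha>\<bar> powr (2 * real m / (real m + 1)))
       powr ((real m + 1) / (2 * real m))"

definition BH_const_n :: "nat \<Rightarrow> nat \<Rightarrow> ereal" where
  "BH_const_n m n = (SUP a\<in>{a. \<exists>\<alpha>\<in>multi_idx n m. a \<alpha> \<noteq> 0}.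
       ereal (hpoly_coef_norm n m a / hpoly_norm n m a))"

definition BH_const :: "nat \<Rightarrow> ereal" where
  "BH_const m = (SUP n. BH_const_n m n)"

end

theory Submission
  imports Defs
begin

(* A polynomial P(x,y) = A x^2 + C xy + B y^2 with sup norm 1 on the square
   satisfies |A|, |B|, |C| <= 1.  If A, B have the same sign, or one of them is at
   most 1/2, then |A| + |B| + |C| <= 2 and hence |A|^(4/3)+|B|^(4/3)+|C|^(4/3) <= 2.
   Otherwise evaluating P at (1, -C/(2B)) and at (-C/(2A), 1) gives C^2 <= 4m(1-m)
   with m = max |A| |B| in [1/2,1].  In all cases the 4/3-power sum is at most
     phi m = 2 m^(4/3) + (2 sqrt (m (1-m)))^(4/3)     for some m in [1/2,1]
   (note phi 1 = 2).  Conversely the polynomials t x^2 + 2 sqrt(t(1-t)) xy - t y^2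
   have sup norm between t and 1 and coefficient norm phi t ^ (3/4).  Hence
   D_{R,2}(l_infty^2) = sup { phi t ^ (3/4) | t in [1/2,1] }, and elementary
   rational estimates of phi locate this supremum near 1.8374. *)

section \<open>The comparison function phi\<close>

definition phi :: "real \<Rightarrow> real" where
  "phi t = 2 * t powr (4/3) + (2 * sqrt (t * (1 - t))) powr (4/3)"

lemma phi_nonneg: "0 \<le> phi t"
  unfolding phi_def by simp

lemma phi_one: "phi 1 = 2"
  unfolding phi_def by simp

lemma cube_powr_one_third: "0 \<le> x \<Longrightarrow> (x powr (1/3)) ^ 3 = (x::real)"
  by (cases "x = 0") (simp_all add: powr_power)

lemma cube_powr_two_thirds: "0 \<le> w \<Longrightarrow> (w powr (2/3)) ^ 3 = (w::real)^2"
  by (cases "w = 0") (simp_all add: powr_power powr_realpow)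

lemma powr_four_thirds_square: "0 \<le> w \<Longrightarrow> (w::real) powr (4/3) = (w powr (2/3))^2"
  by (cases "w = 0") (simp_all add: powr_power)

lemma powr_four_thirds_mult: "0 \<le> w \<Longrightarrow> (w::real) powr (4/3) = w * w powr (1/3)"
proof (cases "w = 0")
  case False
  have "w powr (4/3) = w powr (1 + 1/3)" by simp
  also have "\<dots> = w powr 1 * w powr (1/3)" by (rule powr_add)
  finally show "0 \<le> w \<Longrightarrow> w powr (4/3) = w * w powr (1/3)" by simp
qed simp

lemma phi_cube_roots:
  assumes "0 \<le> t" "t \<le> 1"
  obtains y z where "0 \<le> y" "y^3 = t" "0 \<le> z" "z^3 = 4 * t * (1 - t)"
    and "phi t = 2 * (t * y) + z^2"
proof
  define w where "w = 2 * sqrt (t * (1 - t))"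
  have w0: "0 \<le> w" unfolding w_def using assms by simp
  have w2: "w^2 = 4 * t * (1 - t)" unfolding w_def using assms by (simp add: power_mult_distrib)
  show "(w powr (2/3))^3 = 4 * t * (1 - t)" using cube_powr_two_thirds[OF w0] w2 by simp
  show "(t powr (1/3))^3 = t" using assms by (simp add: cube_powr_one_third)
  show "phi t = 2 * (t * t powr (1/3)) + (w powr (2/3))^2"
    unfolding phi_def w_def[symmetric]
    using powr_four_thirds_mult[of t] powr_four_thirds_square[OF w0] assms by simp
qed simp_all

text \<open>Upper bound: by concavity of the cube root, y and z^2 lie below their
  tangent lines at suitable points, which bounds phi by a concave quadratic in t.\<close>

lemma phi_upper:
  assumes t: "1/2 \<le> t" "t \<le> 1"
  shows "phi t \<le> 22505/10000"
proof -
  obtain y z where y0: "0 \<le> y" and y3: "y^3 = t" and z0: "0 \<le> z"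
    and z3: "z^3 = 4 * t * (1 - t)" and phi: "phi t = 2 * (t * y) + z^2"
    using phi_cube_roots[of t] t by auto
  have "0 \<le> (y - 477/500)^2 * (y + 2*(477/500))" using y0 by simp
  hence ty: "y \<le> 477/500 + (t - (477/500)^3) / (3*(477/500)^2)"
    unfolding y3[symmetric] by (simp add: algebra_simps power2_eq_square power3_eq_cube field_simps)
  have "0 \<le> (z - 1543/2000)^2 * (2*z + 1543/2000)" using z0 by simp
  hence tz: "z^2 \<le> (1543/2000)^2 + 2/(3*(1543/2000)) * (4 * t * (1 - t) - (1543/2000)^3)"
    unfolding z3[symmetric] by (simp add: algebra_simps power2_eq_square power3_eq_cube field_simps)
  have "phi t \<le> 2 * (t * (477/500 + (t - (477/500)^3) / (3*(477/500)^2)))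
      + ((1543/2000)^2 + 2/(3*(1543/2000)) * (4 * t * (1 - t) - (1543/2000)^3))"
    unfolding phi using ty tz t by (intro add_mono mult_left_mono) auto
  also have "\<dots> = (-2868964000/1053231741) * t^2 + (2736011/578625) * t + 2380849/12000000"
    by (simp add: field_simps power2_eq_square power3_eq_cube)
  also have "\<dots> = 22505/10000 - (2868964000/1053231741) * (t - 622521846819/717241000000)^2
      - 137397914216107/1660054294500000000"
    by (simp add: field_simps power2_eq_square)
  also have "\<dots> \<le> 22505/10000"
  proof -
    have "0 \<le> (2868964000/1053231741) * (t - 622521846819/717241000000)^2" by simp
    thus ?thesis by linarith
  qed
  finally show ?thesis .
qed

text \<open>Lower bound at the point t = (477/500)^3, where t^(1/3) is rational.\<close>

lemma phi_lower: "phi ((477/500)^3) > 225038/100000"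
proof -
  define t :: real where "t = (477/500)^3"
  have t01: "0 \<le> t" "t \<le> 1" unfolding t_def by (simp_all add: power_le_one)
  obtain y z where y0: "0 \<le> y" and y3: "y^3 = t" and z3: "z^3 = 4 * t * (1 - t)"
    and phi: "phi t = 2 * (t * y) + z^2"
    using phi_cube_roots[OF t01] by metis
  have y: "y = 477/500" using power_eq_imp_eq_base[of y 3 "477/500"] y0 y3 unfolding t_def by simp
  have z2: "z^2 > 225038/100000 - 2 * (477/500)^4"
  proof (rule ccontr)
    assume "\<not> ?thesis"
    hence "(z^2)^3 \<le> (225038/100000 - 2 * (477/500)^4)^3"
      by (intro power_mono) simp_all
    moreover have "(z^2)^3 = (z^3)^2" by (simp flip: power_mult add: mult.commute)
    ultimately have "(4 * t * (1 - t))^2 \<le> (225038/100000 - 2 * (477/500 :: real)^4)^3"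
      using z3 by simp
    thus False unfolding t_def by (simp add: power2_eq_square power3_eq_cube eval_nat_numeral)
  qed
  have "phi t = 2 * (t * y) + z^2" by (rule phi)
  also have "\<dots> = 2 * (477/500)^4 + z^2" unfolding y t_def by (simp add: power_def)
  finally show ?thesis using z2 unfolding t_def by simp
qed

lemma powr_three_quarters_fourth: "0 \<le> c \<Longrightarrow> ((c::real) powr (3/4))^4 = c^3"
  by (cases "c = 0") (simp_all add: powr_power powr_realpow)

lemma le_powr_three_quarters:
  assumes "0 \<le> c" "0 \<le> L" "L^4 \<le> c^3"
  shows "L \<le> (c::real) powr (3/4)"
proof -
  have "L ^ Suc 3 \<le> (c powr (3/4)) ^ Suc 3" using assms powr_three_quarters_fourth by simp
  thus ?thesis by (rule power_le_imp_le_base) simp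
qed

lemma powr_three_quarters_less: "0 \<le> c \<Longrightarrow> 0 \<le> U \<Longrightarrow> c^3 < U^4 \<Longrightarrow> (c::real) powr (3/4) < U"
  using power_less_imp_less_base[of "c powr (3/4)" 4 U] powr_three_quarters_fourth[of c] by simp

lemma bdd_above_phi: "bdd_above ((\<lambda>t. phi t powr (3/4)) ` {1/2..1})"
  using phi_upper phi_nonneg by (intro bdd_aboveI2[where M = "(22505/10000) powr (3/4)"] powr_mono2) auto

lemma sup_phi_estimate:
  "\<bar>(SUP t\<in>{1/2..1::real}. phi t powr (3/4)) - 1.8374\<bar> < 0.00005"
proof -
  define S where "S = (SUP t\<in>{1/2..1::real}. phi t powr (3/4))"
  have "1.83735 \<le> (225038/100000::real) powr (3/4)"
    by (rule le_powr_three_quarters) (simp_all add: eval_nat_numeral)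
  also have "\<dots> < phi ((477/500)^3) powr (3/4)"
    using phi_lower by (intro powr_less_mono2) auto
  also have "\<dots> \<le> S"
    unfolding S_def using bdd_above_phi by (intro cSUP_upper) (auto simp: power3_eq_cube)
  finally have lower: "1.83735 < S" .
  have "S \<le> (22505/10000) powr (3/4)"
    unfolding S_def using phi_upper phi_nonneg by (intro cSUP_least powr_mono2) auto
  also have "(22505/10000::real) powr (3/4) < 1.83745"
    by (rule powr_three_quarters_less) (simp_all add: eval_nat_numeral)
  finally have upper: "S < 1.83745" .
  have "S - 1.8374 < 0.00005" "- (S - 1.8374) < 0.00005" using lower upper by simp_all
  thus ?thesis unfolding S_def[symmetric] abs_less_iff by blast
qed


text \<open>On the unit cube every monomial has modulus at most 1, so a polynomial is
  bounded there by the l1 norm of its coefficients; in particular the supremum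
  defining hpoly_norm is over a bounded set.\<close>

lemma hpoly_eval_le_coef_sum:
  assumes "\<forall>i<n. \<bar>x i\<bar> \<le> 1"
  shows "\<bar>hpoly_eval n m a x\<bar> \<le> (\<Sum>\<alpha>\<in>multi_idx n m. \<bar>a \<alpha>\<bar>)"
proof -
  have monomial: "\<bar>\<Prod>i<n. x i ^ \<alpha> i\<bar> \<le> 1" for \<alpha>
    unfolding abs_prod power_abs using assms by (intro prod_le_1) (auto intro: power_le_one)
  have "\<bar>hpoly_eval n m a x\<bar> \<le> (\<Sum>\<alpha>\<in>multi_idx n m. \<bar>a \<alpha> * (\<Prod>i<n. x i ^ \<alpha> i)\<bar>)"
    unfolding hpoly_eval_def by (rule sum_abs)
  also have "\<dots> \<le> (\<Sum>\<alpha>\<in>multi_idx n m. \<bar>a \<alpha>\<bar>)"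
    unfolding abs_mult using monomial by (intro sum_mono mult_left_le) auto
  finally show ?thesis .
qed

lemma hpoly_norm_ge:
  assumes "\<forall>i<n. \<bar>x i\<bar> \<le> 1"
  shows "\<bar>hpoly_eval n m a x\<bar> \<le> hpoly_norm n m a"
  unfolding hpoly_norm_def using assms hpoly_eval_le_coef_sum
  by (intro cSUP_upper bdd_aboveI2) auto

lemma hpoly_norm_le:
  assumes "\<And>x. \<forall>i<n. \<bar>x i\<bar> \<le> 1 \<Longrightarrow> \<bar>hpoly_eval n m a x\<bar> \<le> M"
  shows "hpoly_norm n m a \<le> M"
  unfolding hpoly_norm_def using assms
  by (intro cSUP_least) (auto intro!: exI[of _ "\<lambda>_. 0"])

definition e20 :: "nat \<Rightarrow> nat" where "e20 = (\<lambda>i. if i = 0 then 2 else 0)"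
definition e11 :: "nat \<Rightarrow> nat" where "e11 = (\<lambda>i. if i = 0 then 1 else if i = 1 then 1 else 0)"
definition e02 :: "nat \<Rightarrow> nat" where "e02 = (\<lambda>i. if i = 1 then 2 else 0)"

lemma exponents_distinct: "e20 \<noteq> e11" "e20 \<noteq> e02" "e11 \<noteq> e02"
  unfolding e20_def e11_def e02_def by (metis zero_neq_numeral one_neq_zero numeral_eq_one_iff semiring_norm(85))+

lemma multi_idx_2_2: "multi_idx 2 2 = {e20, e11, e02}"
proof (intro equalityI subsetI)
  fix \<alpha> assume "\<alpha> \<in> multi_idx 2 2"
  hence outside: "\<alpha> i = 0" if "i \<noteq> 0" "i \<noteq> 1" for i
    using that unfolding multi_idx_def by simp
  from \<open>\<alpha> \<in> multi_idx 2 2\<close> have sum: "\<alpha> 0 + \<alpha> 1 = 2"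
    unfolding multi_idx_def by (simp add: numeral_2_eq_2)
  define k where "k = \<alpha> 0"
  have shape: "\<alpha> = (\<lambda>i. if i = 0 then k else if i = 1 then 2 - k else 0)"
    using outside sum unfolding k_def by fastforce
  have "k = 0 \<or> k = 1 \<or> k = 2" using sum unfolding k_def by linarith
  then show "\<alpha> \<in> {e20, e11, e02}"
    unfolding shape e20_def e11_def e02_def by (auto simp: fun_eq_iff)
qed (auto simp: multi_idx_def e20_def e11_def e02_def numeral_2_eq_2)

lemma hpoly_eval_2_2:
  "hpoly_eval 2 2 a x = a e20 * (x 0)^2 + a e11 * (x 0 * x 1) + a e02 * (x 1)^2"
  unfolding hpoly_eval_def multi_idx_2_2 using exponents_distinct
  by (simp add: numeral_2_eq_2 e20_def e11_def e02_def)

lemma hpoly_coef_norm_2_2: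
  "hpoly_coef_norm 2 2 a =
     (\<bar>a e20\<bar> powr (4/3) + \<bar>a e11\<bar> powr (4/3) + \<bar>a e02\<bar> powr (4/3)) powr (3/4)"
  unfolding hpoly_coef_norm_def multi_idx_2_2 using exponents_distinct by (simp add: add.assoc)

lemma hpoly_norm_2_2_ge:
  "\<bar>u\<bar> \<le> 1 \<Longrightarrow> \<bar>v\<bar> \<le> 1 \<Longrightarrow>
     \<bar>a e20 * u^2 + a e11 * (u * v) + a e02 * v^2\<bar> \<le> hpoly_norm 2 2 a"
  using hpoly_norm_ge[of 2 "\<lambda>i. if i = 0 then u else v" 2 a] by (simp add: hpoly_eval_2_2)

lemma hpoly_norm_2_2_le:
  assumes "\<And>u v. \<bar>u\<bar> \<le> 1 \<Longrightarrow> \<bar>v\<bar> \<le> 1 \<Longrightarrow> \<bar>a e20 * u^2 + a e11 * (u * v) + a e02 * v^2\<bar> \<le> M"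
  shows "hpoly_norm 2 2 a \<le> M"
  using assms by (intro hpoly_norm_le) (simp add: hpoly_eval_2_2)


section \<open>Quadratic forms bounded by 1 on the square\<close>

lemma bounded_form_corners:
  fixes A B C :: real
  assumes Q: "\<And>x y. \<bar>x\<bar> \<le> 1 \<Longrightarrow> \<bar>y\<bar> \<le> 1 \<Longrightarrow> \<bar>A*x^2 + C*(x*y) + B*y^2\<bar> \<le> 1"
  shows "\<bar>A\<bar> \<le> 1" "\<bar>B\<bar> \<le> 1" "\<bar>A + C + B\<bar> \<le> 1" "\<bar>A - C + B\<bar> \<le> 1" "\<bar>C\<bar> \<le> 1"
proof -
  show "\<bar>A\<bar> \<le> 1" using Q[of 1 0] by simp
  show "\<bar>B\<bar> \<le> 1" using Q[of 0 1] by simp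
  show plus: "\<bar>A + C + B\<bar> \<le> 1" using Q[of 1 1] by simp
  show minus: "\<bar>A - C + B\<bar> \<le> 1" using Q[of 1 "-1"] by simp
  show "\<bar>C\<bar> \<le> 1" using plus minus by (simp add: abs_le_iff)
qed

text \<open>Evaluating at the vertex (1, -C/(2B)) of the parabola y \<mapsto> Q(1,y) gives a
  discriminant-type bound when A and B have opposite signs and |B| > 1/2 (the
  latter guarantees that the vertex lies in the square).\<close>

lemma bounded_form_discriminant:
  fixes A B C :: real
  assumes Q: "\<And>x y. \<bar>x\<bar> \<le> 1 \<Longrightarrow> \<bar>y\<bar> \<le> 1 \<Longrightarrow> \<bar>A*x^2 + C*(x*y) + B*y^2\<bar> \<le> 1"
    and AB: "A*B < 0" and B: "\<bar>B\<bar> > 1/2"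
  shows "C^2 \<le> 4*\<bar>B\<bar>*(1-\<bar>A\<bar>)"
proof -
  have B0: "B \<noteq> 0" using AB by auto
  have "\<bar>-C/(2*B)\<bar> = \<bar>C\<bar> / (2*\<bar>B\<bar>)" by (simp add: abs_div abs_mult)
  also have "\<dots> \<le> 1" using bounded_form_corners(5)[OF Q] B by (simp add: pos_divide_le_eq)
  finally have "\<bar>A*1^2 + C*(1*(-C/(2*B))) + B*(-C/(2*B))^2\<bar> \<le> 1" by (intro Q) simp_all
  also have "A*1^2 + C*(1*(-C/(2*B))) + B*(-C/(2*B))^2 = A - C^2/(4*B)"
    using B0 by (simp add: field_simps power2_eq_square)
  finally have vertex: "\<bar>A - C^2/(4*B)\<bar> \<le> 1" .
  consider "A > 0" "B < 0" | "A < 0" "B > 0" using AB by (auto simp: mult_less_0_iff)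
  then show ?thesis
  proof cases
    case 1
    have "C^2/(4*(-B)) \<le> 1 - A" using vertex 1 by (simp add: abs_le_iff divide_nonneg_neg)
    moreover have "0 < 4*(-B)" using 1 by simp
    ultimately have "C^2 \<le> (1 - A) * (4*(-B))" by (metis pos_divide_le_eq)
    thus ?thesis using 1 by (simp add: algebra_simps)
  next
    case 2
    have "C^2/(4*B) \<le> 1 + A" using vertex by (simp add: abs_le_iff)
    moreover have "0 < 4*B" using 2 by simp
    ultimately have "C^2 \<le> (1 + A) * (4*B)" by (metis pos_divide_le_eq)
    thus ?thesis using 2 by (simp add: algebra_simps)
  qed
qed

lemma bounded_form_l1:
  fixes A B C :: real
  assumes Q: "\<And>x y. \<bar>x\<bar> \<le> 1 \<Longrightarrow> \<bar>y\<bar> \<le> 1 \<Longrightarrow> \<bar>A*x^2 + C*(x*y) + B*y^2\<bar> \<le> 1"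
    and not_indef: "\<not> (A*B < 0 \<and> \<bar>A\<bar> > 1/2 \<and> \<bar>B\<bar> > 1/2)"
  shows "\<bar>A\<bar> + \<bar>C\<bar> + \<bar>B\<bar> \<le> 2"
proof -
  note corners = bounded_form_corners[OF Q]
  show ?thesis
  proof (cases "A*B \<ge> 0")
    case True
    hence "(A \<ge> 0 \<and> B \<ge> 0) \<or> (A \<le> 0 \<and> B \<le> 0)" by (auto simp: zero_le_mult_iff)
    hence "\<bar>A\<bar> + \<bar>C\<bar> + \<bar>B\<bar> \<le> 1" using corners(3,4) by (auto simp: abs_le_iff)
    thus ?thesis by simp
  next
    case False
    hence "A*B < 0" by simp
    hence "(A > 0 \<and> B < 0) \<or> (A < 0 \<and> B > 0)" by (auto simp: mult_less_0_iff)
    hence "\<bar>C\<bar> \<le> 1 - \<bar>\<bar>A\<bar> - \<bar>B\<bar>\<bar>" using corners(3,4) by (auto simp: abs_le_iff)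
    moreover have "\<bar>A\<bar> \<le> 1/2 \<or> \<bar>B\<bar> \<le> 1/2" using False not_indef by auto
    ultimately show ?thesis
      using abs_ge_self[of "\<bar>A\<bar> - \<bar>B\<bar>"] abs_ge_minus_self[of "\<bar>A\<bar> - \<bar>B\<bar>"] by linarith
  qed
qed

text \<open>In the remaining (indefinite) case the discriminant bound, applied to Q
  and to the swapped form Q(y,x), gives |C| \<le> 2 sqrt(m(1-m)) for m = max |A| |B|.\<close>

lemma bounded_form_indefinite:
  fixes A B C :: real
  assumes Q: "\<And>x y. \<bar>x\<bar> \<le> 1 \<Longrightarrow> \<bar>y\<bar> \<le> 1 \<Longrightarrow> \<bar>A*x^2 + C*(x*y) + B*y^2\<bar> \<le> 1"
    and AB: "A*B < 0" and A: "\<bar>A\<bar> > 1/2" and B: "\<bar>B\<bar> > 1/2"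
  defines "m \<equiv> max \<bar>A\<bar> \<bar>B\<bar>"
  shows "1/2 \<le> m" "m \<le> 1" "\<bar>C\<bar> \<le> 2 * sqrt (m * (1 - m))"
proof -
  note corners = bounded_form_corners[OF Q]
  show m: "1/2 \<le> m" "m \<le> 1" unfolding m_def using A corners(1,2) by auto
  have Q_swap: "\<bar>B*x^2 + C*(x*y) + A*y^2\<bar> \<le> 1" if "\<bar>x\<bar> \<le> 1" "\<bar>y\<bar> \<le> 1" for x y
    using Q[OF that(2,1)] by (simp add: algebra_simps)
  have "C^2 \<le> 4*\<bar>B\<bar>*(1-\<bar>A\<bar>)" "C^2 \<le> 4*\<bar>A\<bar>*(1-\<bar>B\<bar>)"
    using bounded_form_discriminant[OF Q AB B] bounded_form_discriminant[OF Q_swap _ A] AB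
    by (simp_all add: mult.commute)
  moreover have "4*\<bar>B\<bar>*(1-\<bar>A\<bar>) \<le> 4*\<bar>A\<bar>*(1-\<bar>A\<bar>)" if "\<bar>B\<bar> \<le> \<bar>A\<bar>"
    using that corners(1) by (intro mult_right_mono) auto
  moreover have "4*\<bar>A\<bar>*(1-\<bar>B\<bar>) \<le> 4*\<bar>B\<bar>*(1-\<bar>B\<bar>)" if "\<bar>A\<bar> \<le> \<bar>B\<bar>"
    using that corners(2) by (intro mult_right_mono) auto
  ultimately have "C^2 \<le> 4*m*(1-m)" unfolding m_def by (cases "\<bar>B\<bar> \<le> \<bar>A\<bar>") auto
  also have "\<dots> = (2 * sqrt (m * (1 - m)))^2" using m by (simp add: power_mult_distrib)
  finally have "\<bar>C\<bar>^2 \<le> (2 * sqrt (m * (1 - m)))^2" by simp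
  moreover have "0 \<le> 2 * sqrt (m * (1 - m))" using m by simp
  ultimately show "\<bar>C\<bar> \<le> 2 * sqrt (m * (1 - m))" by (rule power2_le_imp_le)
qed

lemma powr_four_thirds_le_self: "0 \<le> u \<Longrightarrow> u \<le> 1 \<Longrightarrow> (u::real) powr (4/3) \<le> u"
  by (cases "u = 0") (auto intro: powr_le_one_le)

lemma bounded_form_le_phi:
  fixes A B C :: real
  assumes Q: "\<And>x y. \<bar>x\<bar> \<le> 1 \<Longrightarrow> \<bar>y\<bar> \<le> 1 \<Longrightarrow> \<bar>A*x^2 + C*(x*y) + B*y^2\<bar> \<le> 1"
  shows "\<exists>m\<in>{1/2..1}. \<bar>A\<bar> powr (4/3) + \<bar>C\<bar> powr (4/3) + \<bar>B\<bar> powr (4/3) \<le> phi m"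
proof (cases "A*B < 0 \<and> \<bar>A\<bar> > 1/2 \<and> \<bar>B\<bar> > 1/2")
  case True
  hence AB: "A*B < 0" and A: "\<bar>A\<bar> > 1/2" and B: "\<bar>B\<bar> > 1/2" by auto
  define m where "m = max \<bar>A\<bar> \<bar>B\<bar>"
  note indef = bounded_form_indefinite[OF Q AB A B, folded m_def]
  have "\<bar>A\<bar> powr (4/3) + \<bar>C\<bar> powr (4/3) + \<bar>B\<bar> powr (4/3)
      \<le> m powr (4/3) + (2 * sqrt (m * (1 - m))) powr (4/3) + m powr (4/3)"
    using indef(3) unfolding m_def by (intro add_mono powr_mono2) auto
  also have "\<dots> = phi m" unfolding phi_def by simp
  finally show ?thesis using indef(1,2) by auto
next
  case False
  note corners = bounded_form_corners[OF Q]
  have "\<bar>A\<bar> powr (4/3) + \<bar>C\<bar> powr (4/3) + \<bar>B\<bar> powr (4/3) \<le> \<bar>A\<bar> + \<bar>C\<bar> + \<bar>B\<bar>"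
    using corners(1,2,5) by (intro add_mono powr_four_thirds_le_self) simp_all
  also have "\<dots> \<le> phi 1" using bounded_form_l1[OF Q False] by (simp add: phi_one)
  finally show ?thesis by (intro bexI[of _ 1]) simp_all
qed


section \<open>Extremal polynomials\<close>

text \<open>For t in [1/2,1] and s = sqrt(t(1-t)), the form t x^2 + 2s xy - t y^2 is
  bounded by 1 on the square, because of the two sums-of-squares identities
    t P = t x^2 - (t y - s x)^2   and   t P = (t x + s y)^2 - t y^2.\<close>

lemma extremal_form_bounded:
  assumes t: "1/2 \<le> t" "t \<le> 1" and x: "\<bar>x\<bar> \<le> 1" and y: "\<bar>y\<bar> \<le> 1"
  shows "\<bar>t * x^2 + 2 * sqrt (t * (1 - t)) * (x * y) + (-t) * y^2\<bar> \<le> 1"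
proof -
  define s where "s = sqrt (t * (1 - t))"
  have s2: "s^2 = t * (1 - t)" unfolding s_def using t by simp
  define P where "P = t * x^2 + 2 * s * (x * y) + (-t) * y^2"
  have sos_upper: "t*P - (t*x^2 - (t*y - s*x)^2) = x^2*(s^2 - t*(1-t))"
    unfolding P_def by (simp add: algebra_simps power2_eq_square)
  have sos_lower: "t*P - ((t*x + s*y)^2 - t*y^2) = y^2*(t*(1-t) - s^2)"
    unfolding P_def by (simp add: algebra_simps power2_eq_square)
  have "t*P = t*x^2 - (t*y - s*x)^2" using sos_upper s2 by simp
  hence "t*P \<le> t*x^2" using zero_le_power2[of "t*y - s*x"] by linarith
  hence upper: "P \<le> x^2" using t by simp
  have "t*P = (t*x + s*y)^2 - t*y^2" using sos_lower s2 by simp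
  hence "t * (- (y^2)) \<le> t*P" using zero_le_power2[of "t*x + s*y"] by linarith
  hence lower: "- (y^2) \<le> P" by (rule mult_left_le_imp_le) (use t in simp)
  have "x^2 \<le> 1" "y^2 \<le> 1" using x y by (simp_all add: abs_square_le_1)
  with upper lower have "\<bar>P\<bar> \<le> 1" by (simp add: abs_le_iff)
  thus ?thesis unfolding P_def s_def .
qed

definition extremal_coeffs :: "real \<Rightarrow> (nat \<Rightarrow> nat) \<Rightarrow> real" where
  "extremal_coeffs t = (\<lambda>\<alpha>. if \<alpha> = e20 then t else if \<alpha> = e11 then 2 * sqrt (t * (1 - t))
     else if \<alpha> = e02 then -t else 0)"

lemma extremal_coeffs_values:
  "extremal_coeffs t e20 = t" "extremal_coeffs t e11 = 2 * sqrt (t * (1 - t))"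
  "extremal_coeffs t e02 = -t"
  unfolding extremal_coeffs_def using exponents_distinct by auto

text \<open>The extremal polynomial is nonzero, its sup norm lies in [t,1], and its
  coefficient norm is phi t ^ (3/4); so its ratio is at least phi t ^ (3/4).\<close>

lemma extremal_ratio:
  assumes t: "1/2 \<le> t" "t \<le> 1"
  shows "\<exists>\<alpha>\<in>multi_idx 2 2. extremal_coeffs t \<alpha> \<noteq> 0"
    and "phi t powr (3/4) \<le>
           hpoly_coef_norm 2 2 (extremal_coeffs t) / hpoly_norm 2 2 (extremal_coeffs t)"
proof -
  show "\<exists>\<alpha>\<in>multi_idx 2 2. extremal_coeffs t \<alpha> \<noteq> 0"
    using t by (auto simp: multi_idx_2_2 extremal_coeffs_values intro!: bexI[of _ e20])
  have norm_le_1: "hpoly_norm 2 2 (extremal_coeffs t) \<le> 1"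
  proof (rule hpoly_norm_2_2_le)
    fix u v :: real
    assume "\<bar>u\<bar> \<le> 1" "\<bar>v\<bar> \<le> 1"
    thus "\<bar>extremal_coeffs t e20 * u^2 + extremal_coeffs t e11 * (u * v)
        + extremal_coeffs t e02 * v^2\<bar> \<le> 1"
      unfolding extremal_coeffs_values by (rule extremal_form_bounded[OF t])
  qed
  have norm_ge_t: "t \<le> hpoly_norm 2 2 (extremal_coeffs t)"
    using hpoly_norm_2_2_ge[of 1 0 "extremal_coeffs t"] t by (simp add: extremal_coeffs_values)
  have "hpoly_coef_norm 2 2 (extremal_coeffs t) = phi t powr (3/4)"
    unfolding hpoly_coef_norm_2_2 extremal_coeffs_values phi_def using t by simp
  moreover have "phi t powr (3/4) / 1 \<le> phi t powr (3/4) / hpoly_norm 2 2 (extremal_coeffs t)"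
    using norm_le_1 norm_ge_t t by (intro divide_left_mono) auto
  ultimately show "phi t powr (3/4) \<le>
      hpoly_coef_norm 2 2 (extremal_coeffs t) / hpoly_norm 2 2 (extremal_coeffs t)" by simp
qed

section \<open>The constant D_{R,2}(l_infty^2)\<close>

text \<open>Upper bound for an arbitrary nonzero polynomial: normalising by its sup norm
  N > 0 yields a form bounded by 1 on the square, to which the key estimate applies.\<close>

lemma coef_ratio_le_phi:
  assumes nonzero: "\<exists>\<alpha>\<in>multi_idx 2 2. a \<alpha> \<noteq> 0"
  shows "\<exists>m\<in>{1/2..1}. hpoly_coef_norm 2 2 a / hpoly_norm 2 2 a \<le> phi m powr (3/4)"
proof -
  define A C B N where "A = a e20" and "C = a e11" and "B = a e02" and "N = hpoly_norm 2 2 a"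
  have bounded: "\<bar>A*x^2 + C*(x*y) + B*y^2\<bar> \<le> N" if "\<bar>x\<bar> \<le> 1" "\<bar>y\<bar> \<le> 1" for x y
    using hpoly_norm_2_2_ge[OF that, of a] unfolding A_def B_def C_def N_def .
  have N_pos: "N > 0"
  proof (rule ccontr)
    assume "\<not> N > 0"
    hence "A = 0" "B = 0" "A + C + B = 0" using bounded[of 1 0] bounded[of 0 1] bounded[of 1 1] by auto
    thus False using nonzero unfolding multi_idx_2_2 A_def B_def C_def by auto
  qed
  have normalized: "\<bar>(A/N)*x^2 + (C/N)*(x*y) + (B/N)*y^2\<bar> \<le> 1"
    if "\<bar>x\<bar> \<le> 1" "\<bar>y\<bar> \<le> 1" for x y
  proof -
    have "(A/N)*x^2 + (C/N)*(x*y) + (B/N)*y^2 = (A*x^2 + C*(x*y) + B*y^2) / N"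
      by (simp add: add_divide_distrib)
    thus ?thesis using bounded[OF that] N_pos by (simp add: abs_div pos_divide_le_eq)
  qed
  obtain m where m: "m \<in> {1/2..1}"
    and F_le: "\<bar>A/N\<bar> powr (4/3) + \<bar>C/N\<bar> powr (4/3) + \<bar>B/N\<bar> powr (4/3) \<le> phi m"
    using bounded_form_le_phi[OF normalized] by blast
  define F where "F = \<bar>A/N\<bar> powr (4/3) + \<bar>C/N\<bar> powr (4/3) + \<bar>B/N\<bar> powr (4/3)"
  have "F = (\<bar>A\<bar> powr (4/3) + \<bar>C\<bar> powr (4/3) + \<bar>B\<bar> powr (4/3)) / N powr (4/3)"
    unfolding F_def using N_pos by (simp add: abs_div powr_divide add_divide_distrib)
  hence "F powr (3/4) = (\<bar>A\<bar> powr (4/3) + \<bar>C\<bar> powr (4/3) + \<bar>B\<bar> powr (4/3)) powr (3/4) / N"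
    using N_pos by (simp add: powr_divide powr_powr)
  hence "hpoly_coef_norm 2 2 a / N = F powr (3/4)"
    unfolding hpoly_coef_norm_2_2 A_def B_def C_def by simp
  also have "\<dots> \<le> phi m powr (3/4)"
    using F_le unfolding F_def by (intro powr_mono2) simp_all
  finally show ?thesis using m unfolding N_def by blast
qed

lemma BH_const_n_2_2: "BH_const_n 2 2 = ereal (SUP t\<in>{1/2..1::real}. phi t powr (3/4))"
proof (rule antisym)
  define S where "S = (SUP t\<in>{1/2..1::real}. phi t powr (3/4))"
  have le_S: "phi t powr (3/4) \<le> S" if "t \<in> {1/2..1}" for t
    unfolding S_def using that bdd_above_phi by (rule cSUP_upper)
  show "BH_const_n 2 2 \<le> ereal S"
    unfolding BH_const_n_def
  proof (rule SUP_least)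
    fix a :: "(nat \<Rightarrow> nat) \<Rightarrow> real"
    assume "a \<in> {a. \<exists>\<alpha>\<in>multi_idx 2 2. a \<alpha> \<noteq> 0}"
    then obtain m where "m \<in> {1/2..1}"
      and "hpoly_coef_norm 2 2 a / hpoly_norm 2 2 a \<le> phi m powr (3/4)"
      using coef_ratio_le_phi by blast
    with le_S show "ereal (hpoly_coef_norm 2 2 a / hpoly_norm 2 2 a) \<le> ereal S"
      by (simp add: order_trans)
  qed
  have ge_BH: "ereal (phi t powr (3/4)) \<le> BH_const_n 2 2" if "t \<in> {1/2..1}" for t
  proof -
    have "ereal (phi t powr (3/4))
        \<le> ereal (hpoly_coef_norm 2 2 (extremal_coeffs t) / hpoly_norm 2 2 (extremal_coeffs t))"
      using extremal_ratio(2)[of t] that by simp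
    also have "\<dots> \<le> BH_const_n 2 2"
      unfolding BH_const_n_def using extremal_ratio(1)[of t] that by (intro SUP_upper) simp
    finally show ?thesis .
  qed
  show "ereal S \<le> BH_const_n 2 2"
  proof (cases "BH_const_n 2 2")
    case (real b)
    have "S \<le> b" unfolding S_def using ge_BH real by (intro cSUP_least) auto
    thus ?thesis using real by simp
  next
    case PInf
    thus ?thesis by simp
  next
    case MInf
    thus ?thesis using ge_BH[of 1] by simp
  qed
qed

lemma BH_const_n_le_BH_const: "BH_const_n m n \<le> BH_const m"
  unfolding BH_const_def by (rule SUP_upper) simp

theorem mainTheorem7:
  shows "BH_const 2 \<ge> BH_const_n 2 2
    \<and> BH_const_n 2 2 = ereal (SUP t\<in>{1/2..1::real}.
          (2 * t powr (4/3) + (2 * sqrt (t * (1 - t))) powr (4/3)) powr (3/4))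
    \<and> \<bar>(SUP t\<in>{1/2..1::real}.
          (2 * t powr (4/3) + (2 * sqrt (t * (1 - t))) powr (4/3)) powr (3/4)) - 1.8374\<bar> < 0.00005"
proof -
  have phi_form: "(\<lambda>t. (2 * t powr (4/3) + (2 * sqrt (t * (1 - t))) powr (4/3)) powr (3/4))
      = (\<lambda>t. phi t powr (3/4))"
    by (simp add: phi_def)
  show ?thesis
    unfolding phi_form using BH_const_n_le_BH_const BH_const_n_2_2 sup_phi_estimate by blast
qed

end
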